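(* Let $K$ be an algebraically closed field with $\operatorname{char}K=p>0$. Let $G$ be a finite subgroup of $SL_2(K)$ and $Q$ a $p$-Sylow subgroup of $G$. Assume $Q$ is normal in $G$, $Q$ is elementary abelian, and $G/Q$ is cyclic. Then there exist a positive integer $n$ with $p\nmid n$, a primitive $n$-th root of unity $\zeta_n\in K$, an $\mathbb{F}_p(\zeta_n^2)$-subspace $V\subseteq K$ of finite $\mathbb{F}_p$-dimension $r$, an element $b\in K$, and $g\in SL_2(K)$ such that $gGg^{-1}$ is the subgroup generated by the matrices $\begin{pmatrix}1&v\\0&1\end{pmatrix}$ ($v\in V$) together with $\begin{pmatrix}\zeta_n&b\\0&\zeta_n^{-1}\end{pmatrix}$; i.e. $G$ is conjugate to a group $G(n,p^r)$.
   Context: For $p\nmid n$, $s=[\mathbb{F}_p(\zeta_n^2):\mathbb{F}_p]$ and $s\mid r$, the group $G(n,p^r)$ is realized inside $SL_2(K)$ as the subgroup generated by $\begin{pmatrix}1&v\\0&1\end{pmatrix}$, $v\in V$, and $\begin{pmatrix}\zeta_n&a\\0&\zeta_n^{-1}\end{pmatrix}$, where $V\subseteq K$ is an $\mathbb{F}_p(\zeta_n^2)$-subspace with $\dim_{\mathbb{F}_p}V=r$ and $a\in K$ (with $a=0$ if $n\le 2$). *)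

theory Defs
  imports "HOL-Analysis.Analysis" "HOL-Algebra.Algebra" "HOL-Computational_Algebra.Polynomial"
begin

definition SL2 :: "('a::field ^ 2 ^ 2) monoid" where
  "SL2 = \<lparr>carrier = {A. det A = 1}, mult = (\<lambda>A B. A ** B), one = mat 1\<rparr>"

definition mat2 :: "'a::zero \<Rightarrow> 'a \<Rightarrow> 'a \<Rightarrow> 'a \<Rightarrow> 'a ^ 2 ^ 2" where
  "mat2 a b c d = vector [vector [a, b], vector [c, d]]"

definition sylow_subgroup :: "nat \<Rightarrow> ('a::field ^ 2 ^ 2) set \<Rightarrow> ('a ^ 2 ^ 2) set \<Rightarrow> bool" where
  "sylow_subgroup p Q G \<longleftrightarrow> Q \<subseteq> G \<and> subgroup Q SL2 \<and> card Q = p ^ multiplicity p (card G)"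

definition is_subfield :: "'a::field set \<Rightarrow> bool" where
  "is_subfield F \<longleftrightarrow> 0 \<in> F \<and> 1 \<in> F \<and> (\<forall>x\<in>F. \<forall>y\<in>F. x + y \<in> F \<and> x * y \<in> F)
     \<and> (\<forall>x\<in>F. - x \<in> F \<and> inverse x \<in> F)"

definition gen_subfield :: "'a::field set \<Rightarrow> 'a set" where
  "gen_subfield S = \<Inter>{F. is_subfield F \<and> S \<subseteq> F}"

definition is_subspace_over :: "'a::field set \<Rightarrow> 'a set \<Rightarrow> bool" where
  "is_subspace_over F V \<longleftrightarrow> 0 \<in> V \<and> (\<forall>x\<in>V. \<forall>y\<in>V. x + y \<in> V) \<and> (\<forall>c\<in>F. \<forall>v\<in>V. c * v \<in> V)"

end

theory Submission
  imports Defs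
begin

text \<open>
  First G is conjugated into the upper triangular matrices. If Q is trivial, G is cyclic
  and a generator is triangularised. Otherwise some q \<noteq> 1 in Q is conjugated to a
  transvection U = (1 \<beta>; 0 1). For h \<in> G the element h q h\<inverse> of Q commutes with q and
  has order dividing p, so after the conjugation it is a transvection (1 \<gamma>; 0 1) as well,
  and the relation (1 \<gamma>; 0 1) h = h U with \<beta> \<noteq> 0 forces h to be upper triangular.

  In characteristic p every p-power root of unity is 1, so in a triangular group the
  elements of order dividing p are transvections (1 v; 0 1). Writing G = Q \<langle>x\<rangle> with
  x = (\<zeta> b; 0 \<zeta>\<inverse>), conjugation by x multiplies v by \<zeta>^2. The scalars s with s V \<subseteq> V
  form a subfield when V is a finite additive group, so the set V of parameters v is a
  vector space over the field generated by \<zeta>^2, and G is generated by its transvections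
  together with x. The order of \<zeta> divides |G| and is therefore prime to p.
\<close>

lemma (in group) group_hom_conj:
  assumes "g \<in> carrier G"
  shows "group_hom G G (\<lambda>h. g \<otimes> h \<otimes> inv g)"
proof -
  have "(\<lambda>h. g \<otimes> h \<otimes> inv g) \<in> hom G G"
  proof (rule homI)
    fix x y assume "x \<in> carrier G" "y \<in> carrier G"
    then show "g \<otimes> (x \<otimes> y) \<otimes> inv g = g \<otimes> x \<otimes> inv g \<otimes> (g \<otimes> y \<otimes> inv g)"
      using assms by (simp add: m_assoc[symmetric]) (simp add: m_assoc)
  qed (use assms in auto)
  then show ?thesis
    unfolding group_hom_def group_hom_axioms_def using is_group by simp
qed

lemma (in normal) cyclic_quotient_decomposition:
  assumes "cyclic_group (G Mod H)"
  obtains x where "x \<in> carrier G" and "\<forall>g\<in>carrier G. \<exists>h\<in>H. \<exists>k::int. g = h \<otimes> x [^] k"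
proof -
  obtain y where y: "y \<in> carrier (G Mod H)" "carrier (G Mod H) = range (\<lambda>k::int. y [^]\<^bsub>G Mod H\<^esub> k)"
    using group.cyclic_group[OF factorgroup_is_group] assms by blast
  obtain x where x: "x \<in> carrier G" "y = H #> x" using y(1) by (auto simp: carrier_FactGroup)
  have "\<exists>h\<in>H. \<exists>k::int. g = h \<otimes> x [^] k" if g: "g \<in> carrier G" for g
  proof -
    have "H #> g \<in> carrier (G Mod H)" using g by (auto simp: carrier_FactGroup)
    then obtain k :: int where "H #> g = y [^]\<^bsub>G Mod H\<^esub> k" using y(2) by auto
    also have "\<dots> = H #> (x [^] k)" unfolding x(2) by (rule FactGroup_int_pow[OF x(1)])
    finally have "g \<in> H #> (x [^] k)" using rcos_self[OF g subgroup_axioms] by simp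
    then show ?thesis by (auto simp: r_coset_def)
  qed
  with x(1) that show ?thesis by blast
qed

lemma (in group_hom) image_decomposition:
  assumes x: "x \<in> carrier G" and Q: "Q \<subseteq> carrier G"
    and dec: "\<forall>g\<in>A. \<exists>q\<in>Q. \<exists>k::int. g = q \<otimes>\<^bsub>G\<^esub> x [^]\<^bsub>G\<^esub> k"
  shows "\<forall>g\<in>h ` A. \<exists>q\<in>h ` Q. \<exists>k::int. g = q \<otimes>\<^bsub>H\<^esub> h x [^]\<^bsub>H\<^esub> k"
proof
  fix g assume "g \<in> h ` A"
  then obtain a where "a \<in> A" and g: "g = h a" by blast
  then obtain q k where "q \<in> Q" and "a = q \<otimes>\<^bsub>G\<^esub> x [^]\<^bsub>G\<^esub> (k::int)"
    using dec by blast
  moreover have "q \<in> carrier G" using \<open>q \<in> Q\<close> Q by auto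
  ultimately have "g = h q \<otimes>\<^bsub>H\<^esub> h x [^]\<^bsub>H\<^esub> k"
    using g x by (simp add: hom_int_pow)
  with \<open>q \<in> Q\<close> show "\<exists>q\<in>h ` Q. \<exists>k::int. g = q \<otimes>\<^bsub>H\<^esub> h x [^]\<^bsub>H\<^esub> k" by blast
qed

lemma (in group) conj_closed_if_normal_in_subgroup:
  assumes "subgroup K G" and "N \<lhd> G\<lparr>carrier := K\<rparr>" and "h \<in> K" and "q \<in> N"
  shows "h \<otimes> q \<otimes> inv h \<in> N"
  using normal.inv_op_closed2[OF assms(2), of h q] assms(3,4) m_inv_consistent[OF assms(1,3)]
  by simp

section \<open>Roots of unity and subfields in positive characteristic\<close>

lemma pow_CHAR_power_eq_1D:
  fixes a :: "'a::field"
  assumes "Factorial_Ring.prime CHAR('a)" and "a ^ (CHAR('a) ^ e) = 1"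
  shows "a = 1"
proof -
  have "a ^ (CHAR('a) ^ e) = (a - 1) ^ (CHAR('a) ^ e) + 1"
    using freshmans_dream'[OF assms(1) refl, of "a - 1" 1 e] by simp
  with assms(2) show ?thesis by simp
qed

lemma root_of_unity_order_coprime_CHAR:
  fixes \<zeta> :: "'a::field"
  assumes "Factorial_Ring.prime CHAR('a)" and "N > 0" and "\<zeta> ^ N = 1"
  obtains n where "n > 0" "\<not> CHAR('a) dvd n" "\<zeta> ^ n = 1" "\<forall>k. 0 < k \<and> k < n \<longrightarrow> \<zeta> ^ k \<noteq> 1"
proof -
  let ?p = "CHAR('a)" and ?e = "multiplicity CHAR('a) N"
  obtain m where m: "N = ?p ^ ?e * m" "\<not> ?p dvd m"
    using multiplicity_decompose'[of N ?p] assms(1,2) by (auto simp: prime_def)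
  have "(\<zeta> ^ m) ^ (?p ^ ?e) = 1"
    using assms(3) m(1) by (simp add: power_mult[symmetric] mult.commute)
  then have \<zeta>m: "\<zeta> ^ m = 1" by (rule pow_CHAR_power_eq_1D[OF assms(1)])
  have "m > 0" using m(1) assms(2) by (cases m) auto
  define n where "n = (LEAST k. 0 < k \<and> \<zeta> ^ k = 1)"
  have n: "0 < n" "\<zeta> ^ n = 1"
    using LeastI[of "\<lambda>k. 0 < k \<and> \<zeta> ^ k = 1" m] \<open>m > 0\<close> \<zeta>m by (auto simp: n_def)
  have minimal: "\<forall>k. 0 < k \<and> k < n \<longrightarrow> \<zeta> ^ k \<noteq> 1"
    unfolding n_def using not_less_Least by blast
  have "\<zeta> ^ m = (\<zeta> ^ n) ^ (m div n) * \<zeta> ^ (m mod n)"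
    by (simp add: power_mult[symmetric] power_add[symmetric])
  then have "\<zeta> ^ (m mod n) = 1" using \<zeta>m n(2) by simp
  then have "n dvd m"
    using minimal n(1) mod_less_divisor[of n m] by (auto simp: dvd_eq_mod_eq_0)
  then have "\<not> ?p dvd n" using m(2) dvd_trans by blast
  with n minimal show ?thesis using that by blast
qed

lemma is_subspace_over_gen_subfield:
  fixes V :: "'a::field set"
  assumes fin: "finite V" and zero: "0 \<in> V"
    and add: "\<And>v w. v \<in> V \<Longrightarrow> w \<in> V \<Longrightarrow> v + w \<in> V"
    and neg: "\<And>v. v \<in> V \<Longrightarrow> - v \<in> V"
    and scale: "\<And>v. v \<in> V \<Longrightarrow> c * v \<in> V"
  shows "is_subspace_over (gen_subfield {c}) V"
proof -
  define S where "S = {s. \<forall>v\<in>V. s * v \<in> V}"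
  have "is_subfield S"
    unfolding is_subfield_def
  proof (intro conjI ballI)
    show "0 \<in> S" "1 \<in> S" using zero by (simp_all add: S_def)
    fix s t assume s: "s \<in> S"
    show "- s \<in> S" using s neg by (auto simp: S_def)
    assume "t \<in> S"
    then show "s + t \<in> S" "s * t \<in> S"
      using s add by (auto simp: S_def distrib_right mult.assoc)
  next
    fix s assume s: "s \<in> S"
    show "inverse s \<in> S"
    proof (cases "s = 0")
      case False
      have "(\<lambda>v. s * v) ` V = V"
        by (rule endo_inj_surj[OF fin]) (use s False in \<open>auto simp: S_def inj_on_def\<close>)
      show ?thesis
        unfolding S_def
      proof (intro CollectI ballI)
        fix v assume "v \<in> V"
        then obtain w where "w \<in> V" "v = s * w" using \<open>(\<lambda>v. s * v) ` V = V\<close> by blast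
        then show "inverse s * v \<in> V" using False by (simp add: mult.assoc[symmetric])
      qed
    qed (use zero in \<open>simp add: S_def\<close>)
  qed
  moreover have "c \<in> S" using scale by (simp add: S_def)
  ultimately have "gen_subfield {c} \<subseteq> S" unfolding gen_subfield_def by blast
  then show ?thesis
    using zero add unfolding is_subspace_over_def S_def by blast
qed

lemma mat2_nth [simp]:
  "mat2 a b c d $ 1 $ 1 = a" "mat2 a b c d $ 1 $ 2 = b"
  "mat2 a b c d $ 2 $ 1 = c" "mat2 a b c d $ 2 $ 2 = d"
  by (simp_all add: mat2_def)

lemma mat2_eta: "(A::'a::zero^2^2) = mat2 (A$1$1) (A$1$2) (A$2$1) (A$2$2)"
  by (simp add: vec_eq_iff forall_2)

lemma mat2_eq_iff: "mat2 a b c d = mat2 e f g h \<longleftrightarrow> a = e \<and> b = f \<and> c = g \<and> d = h"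
  by (metis mat2_nth)

lemma mat2_mult:
  "mat2 a b c d ** mat2 e f g h = mat2 (a * e + b * g) (a * f + b * h) (c * e + d * g) (c * f + d * h)"
  by (simp add: vec_eq_iff forall_2 matrix_matrix_mult_def sum_2)

lemma det_mat2: "det (mat2 a b c d) = a * d - b * c"
  by (simp add: det_2)

lemma mat_1_eq_mat2: "mat 1 = mat2 1 0 0 1"
  by (simp add: vec_eq_iff forall_2 mat_def)

lemma SL2_simps:
  "carrier SL2 = {A. det A = 1}" "A \<otimes>\<^bsub>SL2\<^esub> B = A ** B" "\<one>\<^bsub>SL2\<^esub> = mat 1"
  by (simp_all add: SL2_def)

lemma group_SL2: "group (SL2 :: ('a::field^2^2) monoid)"
proof (rule groupI)
  fix A :: "'a^2^2" assume "A \<in> carrier SL2"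
  moreover obtain a b c d where A: "A = mat2 a b c d" by (metis mat2_eta)
  ultimately have "a * d - b * c = 1" by (simp add: SL2_simps det_mat2)
  then show "\<exists>B\<in>carrier SL2. B \<otimes>\<^bsub>SL2\<^esub> A = \<one>\<^bsub>SL2\<^esub>"
    by (intro bexI[of _ "mat2 d (-b) (-c) a"])
      (auto simp: A SL2_simps mat2_mult mat_1_eq_mat2 det_mat2 algebra_simps)
qed (auto simp: SL2_simps det_mul matrix_mul_assoc)

lemma inv_SL2_mat2:
  assumes "a * d - b * c = (1::'a::field)"
  shows "inv\<^bsub>SL2\<^esub> (mat2 a b c d) = mat2 d (-b) (-c) a"
  by (rule group.inv_equality[OF group_SL2])
    (use assms in \<open>auto simp: SL2_simps mat2_mult mat_1_eq_mat2 det_mat2 algebra_simps\<close>)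

section \<open>Triangular subgroups\<close>

definition upper_triangular_SL2 :: "('a::field^2^2) set" where
  "upper_triangular_SL2 = {A. det A = 1 \<and> A$2$1 = 0}"

lemma upper_triangular_SL2_eq:
  fixes A :: "'a::field^2^2"
  assumes "det A = 1" and "A$2$1 = 0"
  shows "A$1$1 \<noteq> 0" and "A = mat2 (A$1$1) (A$1$2) 0 (inverse (A$1$1))"
proof -
  have det: "A$1$1 * A$2$2 = 1" using assms by (simp add: det_2)
  then show "A$1$1 \<noteq> 0" by auto
  have "A$2$2 = inverse (A$1$1)" using inverse_unique[OF det] by simp
  then show "A = mat2 (A$1$1) (A$1$2) 0 (inverse (A$1$1))"
    using assms(2) by (metis mat2_eta)
qed

lemma subgroup_upper_triangular_SL2: "subgroup upper_triangular_SL2 (SL2 :: ('a::field^2^2) monoid)"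
proof (rule group.subgroupI[OF group_SL2])
  show "upper_triangular_SL2 \<noteq> {}"
    by (auto simp: upper_triangular_SL2_def intro!: exI[of _ "mat2 1 0 0 1"] simp: det_mat2)
next
  fix A :: "'a^2^2" assume "A \<in> upper_triangular_SL2"
  then have "det A = 1" "A$2$1 = 0" by (simp_all add: upper_triangular_SL2_def)
  then obtain a b where "A = mat2 a b 0 (inverse a)" "a \<noteq> 0"
    using upper_triangular_SL2_eq by metis
  then show "inv\<^bsub>SL2\<^esub> A \<in> upper_triangular_SL2"
    by (simp add: inv_SL2_mat2 upper_triangular_SL2_def det_mat2)
next
  fix A B :: "'a^2^2" assume "A \<in> upper_triangular_SL2" "B \<in> upper_triangular_SL2"
  then have "det A = 1" "A$2$1 = 0" "det B = 1" "B$2$1 = 0"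
    by (simp_all add: upper_triangular_SL2_def)
  then obtain a b c d where "A = mat2 a b 0 (inverse a)" "a \<noteq> 0" "B = mat2 c d 0 (inverse c)" "c \<noteq> 0"
    using upper_triangular_SL2_eq by metis
  then show "A \<otimes>\<^bsub>SL2\<^esub> B \<in> upper_triangular_SL2"
    by (simp add: upper_triangular_SL2_def SL2_simps mat2_mult det_mat2 field_simps)
qed (auto simp: upper_triangular_SL2_def SL2_simps)

lemma upper_triangular_nat_pow:
  fixes A :: "'a::field^2^2"
  assumes "A$2$1 = 0"
  shows "(A [^]\<^bsub>SL2\<^esub> k)$2$1 = 0 \<and> (A [^]\<^bsub>SL2\<^esub> k)$1$1 = (A$1$1) ^ k"
proof (induction k)
  case 0
  then show ?case by (simp add: SL2_simps mat_1_eq_mat2)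
next
  case (Suc k)
  have "A [^]\<^bsub>SL2\<^esub> Suc k = A [^]\<^bsub>SL2\<^esub> k ** A" by (simp add: SL2_simps)
  also have "\<dots> = mat2 ((A$1$1) ^ k) ((A [^]\<^bsub>SL2\<^esub> k)$1$2) 0 ((A [^]\<^bsub>SL2\<^esub> k)$2$2)
       ** mat2 (A$1$1) (A$1$2) 0 (A$2$2)"
    using Suc assms by (metis mat2_eta)
  finally show ?case by (simp add: mat2_mult)
qed

lemma upper_triangular_exponent_CHAR_unipotent:
  fixes A :: "'a::field^2^2"
  assumes "Factorial_Ring.prime CHAR('a)" and "det A = 1" and "A$2$1 = 0"
    and "A [^]\<^bsub>SL2\<^esub> CHAR('a) = \<one>\<^bsub>SL2\<^esub>"
  shows "A = mat2 1 (A$1$2) 0 1"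
proof -
  have "(A$1$1) ^ (CHAR('a) ^ 1) = 1"
    using upper_triangular_nat_pow[OF assms(3), of "CHAR('a)"] assms(4)
    by (simp add: SL2_simps mat_1_eq_mat2)
  then have "A$1$1 = 1" by (rule pow_CHAR_power_eq_1D[OF assms(1)])
  with upper_triangular_SL2_eq(2)[OF assms(2,3)] show ?thesis by simp
qed

lemma transvection_mult: "mat2 1 v 0 1 ** mat2 1 w 0 1 = mat2 (1::'a::field) (v + w) 0 1"
  by (simp add: mat2_mult add.commute)

lemma inv_SL2_transvection: "inv\<^bsub>SL2\<^esub> (mat2 1 v 0 1) = mat2 (1::'a::field) (- v) 0 1"
  by (simp add: inv_SL2_mat2)

lemma conj_transvection:
  fixes \<zeta> :: "'a::field"
  assumes "\<zeta> \<noteq> 0"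
  shows "mat2 \<zeta> b 0 (inverse \<zeta>) ** mat2 1 v 0 1 ** inv\<^bsub>SL2\<^esub> (mat2 \<zeta> b 0 (inverse \<zeta>))
    = mat2 1 (\<zeta>\<^sup>2 * v) 0 1"
  using assms by (simp add: inv_SL2_mat2 mat2_mult mat2_eq_iff field_simps power2_eq_square)

lemma commutes_transvection_imp_upper:
  fixes M :: "'a::field^2^2"
  assumes "\<beta> \<noteq> 0" and "M ** mat2 1 \<beta> 0 1 = mat2 1 \<beta> 0 1 ** M"
  shows "M$2$1 = 0"
  using assms by (subst (asm) (1 2) mat2_eta) (simp add: mat2_mult mat2_eq_iff)

lemma intertwines_transvections_imp_upper:
  fixes Y :: "'a::field^2^2"
  assumes "\<beta> \<noteq> 0" and "mat2 1 \<gamma> 0 1 ** Y = Y ** mat2 1 \<beta> 0 1"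
  shows "Y$2$1 = 0"
  using assms by (subst (asm) (1 2) mat2_eta) (simp add: mat2_mult mat2_eq_iff)

lemma intertwined_by_centralizer_imp_upper:
  fixes M Y :: "'a::field^2^2"
  assumes "Factorial_Ring.prime CHAR('a)" and "\<beta> \<noteq> 0" and "det M = 1"
    and "M ** mat2 1 \<beta> 0 1 = mat2 1 \<beta> 0 1 ** M" and "M [^]\<^bsub>SL2\<^esub> CHAR('a) = \<one>\<^bsub>SL2\<^esub>"
    and "M ** Y = Y ** mat2 1 \<beta> 0 1"
  shows "Y$2$1 = 0"
proof -
  have "M$2$1 = 0" using commutes_transvection_imp_upper assms(2,4) .
  then have "M = mat2 1 (M$1$2) 0 1"
    using upper_triangular_exponent_CHAR_unipotent assms(1,3,5) by blast
  with assms(6) show ?thesis using intertwines_transvections_imp_upper[OF assms(2)] by metis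
qed

lemma finite_transvection_params:
  assumes "finite H"
  shows "finite {v::'a::field. mat2 1 v 0 1 \<in> H}"
proof -
  have "inj (\<lambda>v::'a. mat2 1 v 0 1)" by (auto intro: injI simp: mat2_eq_iff)
  then show ?thesis using finite_vimageI[OF assms] by (simp add: vimage_def)
qed

lemma transvection_params_subspace:
  fixes H :: "('a::field^2^2) set"
  assumes fin: "finite H" and sub: "subgroup H SL2"
    and x: "mat2 \<zeta> b 0 (inverse \<zeta>) \<in> H" and "\<zeta> \<noteq> 0"
  shows "is_subspace_over (gen_subfield {\<zeta>\<^sup>2}) {v. mat2 1 v 0 1 \<in> H}"
proof (rule is_subspace_over_gen_subfield)
  show "finite {v. mat2 1 v 0 1 \<in> H}" using fin by (rule finite_transvection_params)
  show "0 \<in> {v. mat2 1 v 0 1 \<in> H}"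
    using subgroup.one_closed[OF sub] by (simp add: SL2_simps mat_1_eq_mat2)
  fix v assume v: "v \<in> {v. mat2 1 v 0 1 \<in> H}"
  show "- v \<in> {v. mat2 1 v 0 1 \<in> H}"
    using subgroup.m_inv_closed[OF sub, of "mat2 1 v 0 1"] v by (simp add: inv_SL2_transvection)
  have "mat2 \<zeta> b 0 (inverse \<zeta>) \<otimes>\<^bsub>SL2\<^esub> mat2 1 v 0 1 \<otimes>\<^bsub>SL2\<^esub> inv\<^bsub>SL2\<^esub> (mat2 \<zeta> b 0 (inverse \<zeta>)) \<in> H"
    using v x by (simp add: sub subgroup.m_closed subgroup.m_inv_closed)
  then show "\<zeta>\<^sup>2 * v \<in> {v. mat2 1 v 0 1 \<in> H}"
    using \<open>\<zeta> \<noteq> 0\<close> by (simp add: SL2_simps conj_transvection)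
  fix w assume "w \<in> {v. mat2 1 v 0 1 \<in> H}"
  then show "v + w \<in> {v. mat2 1 v 0 1 \<in> H}"
    using subgroup.m_closed[OF sub, of "mat2 1 v 0 1" "mat2 1 w 0 1"] v
    by (simp add: SL2_simps transvection_mult)
qed

lemma upper_triangular_subgroup_eq_generate:
  fixes H P :: "('a::field^2^2) set"
  assumes "Factorial_Ring.prime CHAR('a)" and sub: "subgroup H SL2" and up: "\<forall>h\<in>H. h$2$1 = 0"
    and xH: "x \<in> H" and PH: "P \<subseteq> H" and exp: "\<forall>q\<in>P. q [^]\<^bsub>SL2\<^esub> CHAR('a) = \<one>\<^bsub>SL2\<^esub>"
    and dec: "\<forall>h\<in>H. \<exists>q\<in>P. \<exists>k::int. h = q \<otimes>\<^bsub>SL2\<^esub> x [^]\<^bsub>SL2\<^esub> k"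
  shows "H = generate SL2 ((\<lambda>v. mat2 1 v 0 1) ` {v. mat2 1 v 0 1 \<in> H} \<union> {x})"
    (is "H = generate SL2 ?S")
proof
  interpret SL2: group "SL2 :: ('a^2^2) monoid" by (rule group_SL2)
  have "?S \<subseteq> H" using xH by auto
  then show "generate SL2 ?S \<subseteq> H" by (rule SL2.generate_subgroup_incl[OF _ sub])
  have gen: "subgroup (generate SL2 ?S) SL2"
    using \<open>?S \<subseteq> H\<close> subgroup.subset[OF sub] by (intro SL2.generate_is_subgroup) auto
  show "H \<subseteq> generate SL2 ?S"
  proof
    fix h assume "h \<in> H"
    then obtain q k where q: "q \<in> P" and h: "h = q \<otimes>\<^bsub>SL2\<^esub> x [^]\<^bsub>SL2\<^esub> (k::int)"
      using dec by blast
    have "q \<in> H" using q PH by auto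
    then have "det q = 1" "q$2$1 = 0" using subgroup.subset[OF sub] up by (auto simp: SL2_simps)
    then have "q = mat2 1 (q$1$2) 0 1"
      using upper_triangular_exponent_CHAR_unipotent assms(1) exp q by blast
    then have "q \<in> generate SL2 ?S" using \<open>q \<in> H\<close> by (auto intro: generate.incl)
    moreover have "x [^]\<^bsub>SL2\<^esub> k \<in> generate SL2 ?S"
      by (rule SL2.subgroup_int_pow_closed[OF gen generate.incl]) simp
    ultimately show "h \<in> generate SL2 ?S" unfolding h by (rule subgroup.m_closed[OF gen])
  qed
qed

lemma upper_triangular_subgroup_standard_form:
  fixes H P :: "('a::field^2^2) set"
  assumes "Factorial_Ring.prime CHAR('a)" and fin: "finite H" and sub: "subgroup H SL2"
    and up: "\<forall>h\<in>H. h$2$1 = 0" and xH: "x \<in> H" and "P \<subseteq> H"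
    and "\<forall>q\<in>P. q [^]\<^bsub>SL2\<^esub> CHAR('a) = \<one>\<^bsub>SL2\<^esub>"
    and "\<forall>h\<in>H. \<exists>q\<in>P. \<exists>k::int. h = q \<otimes>\<^bsub>SL2\<^esub> x [^]\<^bsub>SL2\<^esub> k"
  shows "\<exists>(n::nat) \<zeta> V b. n > 0 \<and> \<not> CHAR('a) dvd n \<and> \<zeta> ^ n = 1
     \<and> (\<forall>k. 0 < k \<and> k < n \<longrightarrow> \<zeta> ^ k \<noteq> 1)
     \<and> is_subspace_over (gen_subfield {\<zeta>\<^sup>2}) V \<and> finite V
     \<and> H = generate SL2 ((\<lambda>v. mat2 1 v 0 1) ` V \<union> {mat2 \<zeta> b 0 (inverse \<zeta>)})"
proof -
  interpret SL2: group "SL2 :: ('a^2^2) monoid" by (rule group_SL2)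
  have "det x = 1" "x$2$1 = 0" using xH subgroup.subset[OF sub] up by (auto simp: SL2_simps)
  define \<zeta> b where "\<zeta> = x$1$1" and "b = x$1$2"
  have x: "x = mat2 \<zeta> b 0 (inverse \<zeta>)" and "\<zeta> \<noteq> 0"
    unfolding \<zeta>_def b_def using upper_triangular_SL2_eq[OF \<open>det x = 1\<close> \<open>x$2$1 = 0\<close>] by simp_all
  have "x [^]\<^bsub>SL2\<lparr>carrier := H\<rparr>\<^esub> order (SL2\<lparr>carrier := H\<rparr>) = \<one>\<^bsub>SL2\<lparr>carrier := H\<rparr>\<^esub>"
    by (rule group.pow_order_eq_1[OF SL2.subgroup_imp_group[OF sub]]) (simp add: xH)
  then have "x [^]\<^bsub>SL2\<^esub> card H = \<one>\<^bsub>SL2\<^esub>" by (simp add: nat_pow_def order_def)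
  then have "\<zeta> ^ card H = 1"
    using upper_triangular_nat_pow[OF \<open>x$2$1 = 0\<close>, of "card H"]
    by (simp add: \<zeta>_def SL2_simps mat_1_eq_mat2)
  moreover have "card H > 0" using fin xH by (auto simp: card_gt_0_iff)
  ultimately obtain n where "n > 0" "\<not> CHAR('a) dvd n" "\<zeta> ^ n = 1"
      "\<forall>k. 0 < k \<and> k < n \<longrightarrow> \<zeta> ^ k \<noteq> 1"
    using root_of_unity_order_coprime_CHAR assms(1) by metis
  moreover have "is_subspace_over (gen_subfield {\<zeta>\<^sup>2}) {v. mat2 1 v 0 1 \<in> H}"
    using transvection_params_subspace[OF fin sub xH[unfolded x] \<open>\<zeta> \<noteq> 0\<close>] .
  moreover have "H = generate SL2 ((\<lambda>v. mat2 1 v 0 1) ` {v. mat2 1 v 0 1 \<in> H} \<union> {x})"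
    using upper_triangular_subgroup_eq_generate assms(1,3,4,5,6,7,8) .
  ultimately show ?thesis
    using finite_transvection_params[OF fin] x by blast
qed

section \<open>Triangularisation over an algebraically closed field\<close>

lemma exists_conj_upper_triangular:
  fixes A :: "'a::alg_closed_field^2^2"
  assumes "det A = 1"
  obtains g where "g \<in> carrier SL2" and "(g \<otimes>\<^bsub>SL2\<^esub> A \<otimes>\<^bsub>SL2\<^esub> inv\<^bsub>SL2\<^esub> g)$2$1 = 0"
proof -
  obtain a b c d where A: "A = mat2 a b c d" by (metis mat2_eta)
  have det: "a * d - b * c = 1" using assms by (simp add: A det_mat2)
  show ?thesis
  proof (cases "c = 0")
    case True
    then show ?thesis
      using that[of "mat2 1 0 0 1"] by (simp add: SL2_simps A inv_SL2_mat2 det_mat2 mat2_mult)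
  next
    case False
    obtain \<mu> where "poly [:1, - (a + d), 1:] \<mu> = 0"
      using alg_closed_imp_poly_has_root[of "[:1, - (a + d), 1:]"] by auto
    then have eigen: "\<mu> * \<mu> - (a + d) * \<mu> + (a * d - b * c) = 0"
      using det by (simp add: algebra_simps)
    \<comment> \<open>the first column (\<mu> - d, c) of g\<inverse> is an eigenvector of A for the eigenvalue \<mu>\<close>
    define g where "g = mat2 0 (1 / c) (- c) (\<mu> - d)"
    have g_det: "0 * (\<mu> - d) - (1 / c) * (- c) = 1" using False by simp
    have "(g \<otimes>\<^bsub>SL2\<^esub> A \<otimes>\<^bsub>SL2\<^esub> inv\<^bsub>SL2\<^esub> g)$2$1
        = c * (\<mu> * \<mu> - (a + d) * \<mu> + (a * d - b * c))"
      unfolding g_def inv_SL2_mat2[OF g_det] by (simp add: SL2_simps A mat2_mult algebra_simps)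
    also have "\<dots> = 0" using eigen by simp
    finally have "(g \<otimes>\<^bsub>SL2\<^esub> A \<otimes>\<^bsub>SL2\<^esub> inv\<^bsub>SL2\<^esub> g)$2$1 = 0" .
    moreover have "g \<in> carrier SL2" using g_det by (simp add: g_def SL2_simps det_mat2)
    ultimately show ?thesis using that by blast
  qed
qed

lemma exists_conj_upper_triangular_cyclic:
  fixes G :: "('a::alg_closed_field^2^2) set"
  assumes x: "x \<in> carrier SL2" and G: "\<forall>h\<in>G. \<exists>k::int. h = x [^]\<^bsub>SL2\<^esub> k"
  shows "\<exists>g\<in>carrier SL2. \<forall>h\<in>G. (g \<otimes>\<^bsub>SL2\<^esub> h \<otimes>\<^bsub>SL2\<^esub> inv\<^bsub>SL2\<^esub> g)$2$1 = 0"
proof -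
  interpret SL2: group "SL2 :: ('a^2^2) monoid" by (rule group_SL2)
  obtain g where g: "g \<in> carrier SL2" and gx: "(g \<otimes>\<^bsub>SL2\<^esub> x \<otimes>\<^bsub>SL2\<^esub> inv\<^bsub>SL2\<^esub> g)$2$1 = 0"
    using exists_conj_upper_triangular x by (auto simp: SL2_simps)
  interpret C: group_hom SL2 SL2 "\<lambda>h. g \<otimes>\<^bsub>SL2\<^esub> h \<otimes>\<^bsub>SL2\<^esub> inv\<^bsub>SL2\<^esub> g"
    by (rule SL2.group_hom_conj[OF g])
  have "g \<otimes>\<^bsub>SL2\<^esub> x \<otimes>\<^bsub>SL2\<^esub> inv\<^bsub>SL2\<^esub> g \<in> upper_triangular_SL2"
    using gx C.hom_closed[OF x] by (simp add: upper_triangular_SL2_def SL2_simps)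
  then have upper: "(g \<otimes>\<^bsub>SL2\<^esub> x \<otimes>\<^bsub>SL2\<^esub> inv\<^bsub>SL2\<^esub> g) [^]\<^bsub>SL2\<^esub> k \<in> upper_triangular_SL2"
    for k :: int
    by (rule SL2.subgroup_int_pow_closed[OF subgroup_upper_triangular_SL2])
  show ?thesis
  proof (intro bexI[OF _ g] ballI)
    fix h assume "h \<in> G"
    then obtain k :: int where "h = x [^]\<^bsub>SL2\<^esub> k" using G by blast
    then show "(g \<otimes>\<^bsub>SL2\<^esub> h \<otimes>\<^bsub>SL2\<^esub> inv\<^bsub>SL2\<^esub> g)$2$1 = 0"
      using upper[of k] C.hom_int_pow[OF x] by (simp add: upper_triangular_SL2_def)
  qed
qed

lemma exists_conj_upper_triangular_normalizer:
  fixes G Q :: "('a::alg_closed_field^2^2) set"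
  assumes prime: "Factorial_Ring.prime CHAR('a)" and G: "G \<subseteq> carrier SL2" and Q: "Q \<subseteq> carrier SL2"
    and q0: "q0 \<in> Q" "q0 \<noteq> \<one>\<^bsub>SL2\<^esub>"
    and normal: "\<forall>h\<in>G. \<forall>q\<in>Q. h \<otimes>\<^bsub>SL2\<^esub> q \<otimes>\<^bsub>SL2\<^esub> inv\<^bsub>SL2\<^esub> h \<in> Q"
    and comm: "\<forall>q\<in>Q. \<forall>r\<in>Q. q \<otimes>\<^bsub>SL2\<^esub> r = r \<otimes>\<^bsub>SL2\<^esub> q"
    and exp: "\<forall>q\<in>Q. q [^]\<^bsub>SL2\<^esub> CHAR('a) = \<one>\<^bsub>SL2\<^esub>"
  shows "\<exists>g\<in>carrier SL2. \<forall>h\<in>G. (g \<otimes>\<^bsub>SL2\<^esub> h \<otimes>\<^bsub>SL2\<^esub> inv\<^bsub>SL2\<^esub> g)$2$1 = 0"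
proof -
  interpret SL2: group "SL2 :: ('a^2^2) monoid" by (rule group_SL2)
  have q0c: "q0 \<in> carrier SL2" using q0 Q by auto
  obtain g where g: "g \<in> carrier SL2" and gq0: "(g \<otimes>\<^bsub>SL2\<^esub> q0 \<otimes>\<^bsub>SL2\<^esub> inv\<^bsub>SL2\<^esub> g)$2$1 = 0"
    using exists_conj_upper_triangular q0c by (auto simp: SL2_simps)
  interpret C: group_hom SL2 SL2 "\<lambda>h. g \<otimes>\<^bsub>SL2\<^esub> h \<otimes>\<^bsub>SL2\<^esub> inv\<^bsub>SL2\<^esub> g"
    by (rule SL2.group_hom_conj[OF g])
  let ?c = "\<lambda>h. g \<otimes>\<^bsub>SL2\<^esub> h \<otimes>\<^bsub>SL2\<^esub> inv\<^bsub>SL2\<^esub> g"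
  have det: "det (?c q) = 1" and exp_c: "?c q [^]\<^bsub>SL2\<^esub> CHAR('a) = \<one>\<^bsub>SL2\<^esub>" if "q \<in> Q" for q
    using C.hom_closed C.hom_nat_pow[of q "CHAR('a)", symmetric] SL2.r_inv[OF g] exp that Q
    by (auto simp: SL2_simps)
  define \<beta> where "\<beta> = ?c q0 $1$2"
  have U: "?c q0 = mat2 1 \<beta> 0 1"
    unfolding \<beta>_def using upper_triangular_exponent_CHAR_unipotent[OF prime det[OF q0(1)] gq0 exp_c[OF q0(1)]] .
  have "\<beta> \<noteq> 0"
  proof
    assume "\<beta> = 0"
    then have "?c q0 = \<one>\<^bsub>SL2\<^esub>" using U by (simp add: SL2_simps mat_1_eq_mat2)
    then show False using q0(2) g q0c by (simp add: SL2.inv_solve_right')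
  qed
  show ?thesis
  proof (intro bexI[OF _ g] ballI)
    fix h assume "h \<in> G"
    then have h: "h \<in> carrier SL2" using G by auto
    define r where "r = h \<otimes>\<^bsub>SL2\<^esub> q0 \<otimes>\<^bsub>SL2\<^esub> inv\<^bsub>SL2\<^esub> h"
    have r: "r \<in> Q" "r \<in> carrier SL2" unfolding r_def using normal \<open>h \<in> G\<close> q0(1) Q by auto
    have "r \<otimes>\<^bsub>SL2\<^esub> q0 = q0 \<otimes>\<^bsub>SL2\<^esub> r" using comm r(1) q0(1) by blast
    then have commutes: "?c r ** mat2 1 \<beta> 0 1 = mat2 1 \<beta> 0 1 ** ?c r"
      using C.hom_mult[OF r(2) q0c] C.hom_mult[OF q0c r(2)] U by (simp add: SL2_simps)
    have "r \<otimes>\<^bsub>SL2\<^esub> h = h \<otimes>\<^bsub>SL2\<^esub> q0"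
      unfolding r_def using h q0c by (simp add: SL2.m_assoc)
    then have "?c r ** ?c h = ?c h ** mat2 1 \<beta> 0 1"
      using C.hom_mult[OF r(2) h] C.hom_mult[OF h q0c] U by (simp add: SL2_simps)
    then show "?c h $2$1 = 0"
      by (rule intertwined_by_centralizer_imp_upper[OF prime \<open>\<beta> \<noteq> 0\<close> det[OF r(1)] commutes exp_c[OF r(1)]])
  qed
qed

lemma exists_conj_upper_triangular_cyclic_extension:
  fixes G Q :: "('a::alg_closed_field^2^2) set"
  assumes "Factorial_Ring.prime CHAR('a)" and "G \<subseteq> carrier SL2" and "Q \<subseteq> carrier SL2"
    and x: "x \<in> carrier SL2"
    and "\<forall>h\<in>G. \<forall>q\<in>Q. h \<otimes>\<^bsub>SL2\<^esub> q \<otimes>\<^bsub>SL2\<^esub> inv\<^bsub>SL2\<^esub> h \<in> Q"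
    and "\<forall>q\<in>Q. \<forall>r\<in>Q. q \<otimes>\<^bsub>SL2\<^esub> r = r \<otimes>\<^bsub>SL2\<^esub> q"
    and "\<forall>q\<in>Q. q [^]\<^bsub>SL2\<^esub> CHAR('a) = \<one>\<^bsub>SL2\<^esub>"
    and dec: "\<forall>h\<in>G. \<exists>q\<in>Q. \<exists>k::int. h = q \<otimes>\<^bsub>SL2\<^esub> x [^]\<^bsub>SL2\<^esub> k"
  shows "\<exists>g\<in>carrier SL2. \<forall>h\<in>G. (g \<otimes>\<^bsub>SL2\<^esub> h \<otimes>\<^bsub>SL2\<^esub> inv\<^bsub>SL2\<^esub> g)$2$1 = 0"
proof (cases "Q \<subseteq> {\<one>\<^bsub>SL2\<^esub>}")
  case True
  interpret SL2: group "SL2 :: ('a^2^2) monoid" by (rule group_SL2)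
  have "\<forall>h\<in>G. \<exists>k::int. h = x [^]\<^bsub>SL2\<^esub> k"
    using dec True SL2.l_one[OF SL2.int_pow_closed[OF x]] by fastforce
  then show ?thesis by (rule exists_conj_upper_triangular_cyclic[OF x])
next
  case False
  then obtain q0 where "q0 \<in> Q" "q0 \<noteq> \<one>\<^bsub>SL2\<^esub>" by blast
  then show ?thesis using exists_conj_upper_triangular_normalizer assms(1-3,5-7) by blast
qed

theorem lemma3p5:
  fixes G Q :: "('a::alg_closed_field ^ 2 ^ 2) set" and p :: nat
  assumes "Factorial_Ring.prime p" and "CHAR('a) = p"
    and "finite G" and "subgroup G SL2"
    and "sylow_subgroup p Q G"
    and "Q \<lhd> (SL2\<lparr>carrier := G\<rparr>)"
    and "\<forall>x\<in>Q. \<forall>y\<in>Q. x \<otimes>\<^bsub>SL2\<^esub> y = y \<otimes>\<^bsub>SL2\<^esub> x"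
    and "\<forall>x\<in>Q. x [^]\<^bsub>SL2\<^esub> p = \<one>\<^bsub>SL2\<^esub>"
    and "cyclic_group ((SL2\<lparr>carrier := G\<rparr>) Mod Q)"
  shows "\<exists>(n::nat) (\<zeta>::'a) V (b::'a) g.
           n > 0 \<and> \<not> p dvd n \<and> \<zeta> ^ n = 1 \<and> (\<forall>k. 0 < k \<and> k < n \<longrightarrow> \<zeta> ^ k \<noteq> 1)
         \<and> is_subspace_over (gen_subfield {\<zeta>\<^sup>2}) V \<and> finite V
         \<and> g \<in> carrier SL2
         \<and> (\<lambda>h. g \<otimes>\<^bsub>SL2\<^esub> h \<otimes>\<^bsub>SL2\<^esub> inv\<^bsub>SL2\<^esub> g) ` G
             = generate SL2 ((\<lambda>v. mat2 1 v 0 1) ` V \<union> {mat2 \<zeta> b 0 (inverse \<zeta>)})"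
proof -
  interpret SL2: group "SL2 :: ('a^2^2) monoid" by (rule group_SL2)
  interpret N: normal Q "SL2\<lparr>carrier := G\<rparr>" by (rule assms(6))
  note p = assms(2)[symmetric] and sub = assms(4)
  have prime: "Factorial_Ring.prime CHAR('a)" using assms(1) unfolding p .
  have exp: "\<forall>q\<in>Q. q [^]\<^bsub>SL2\<^esub> CHAR('a) = \<one>\<^bsub>SL2\<^esub>" using assms(8) unfolding p .
  have QG: "Q \<subseteq> G" using assms(5) by (simp add: sylow_subgroup_def)
  have G: "G \<subseteq> carrier SL2" and Q: "Q \<subseteq> carrier SL2" using subgroup.subset[OF sub] QG by auto
  obtain x where x: "x \<in> G" and "\<forall>h\<in>G. \<exists>q\<in>Q. \<exists>k::int.
      h = q \<otimes>\<^bsub>SL2\<lparr>carrier := G\<rparr>\<^esub> x [^]\<^bsub>SL2\<lparr>carrier := G\<rparr>\<^esub> k"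
    using N.cyclic_quotient_decomposition[OF assms(9)] by auto
  then have dec: "\<forall>h\<in>G. \<exists>q\<in>Q. \<exists>k::int. h = q \<otimes>\<^bsub>SL2\<^esub> x [^]\<^bsub>SL2\<^esub> k"
    by (simp add: SL2.int_pow_consistent[OF sub x])
  have xc: "x \<in> carrier SL2" using x G by auto
  obtain g where g: "g \<in> carrier SL2" and up: "\<forall>h\<in>G. (g \<otimes>\<^bsub>SL2\<^esub> h \<otimes>\<^bsub>SL2\<^esub> inv\<^bsub>SL2\<^esub> g)$2$1 = 0"
    using exists_conj_upper_triangular_cyclic_extension[OF prime G Q xc _ assms(7) exp dec]
      SL2.conj_closed_if_normal_in_subgroup[OF sub assms(6)] by blast
  interpret C: group_hom SL2 SL2 "\<lambda>h. g \<otimes>\<^bsub>SL2\<^esub> h \<otimes>\<^bsub>SL2\<^esub> inv\<^bsub>SL2\<^esub> g"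
    by (rule SL2.group_hom_conj[OF g])
  let ?c = "\<lambda>h. g \<otimes>\<^bsub>SL2\<^esub> h \<otimes>\<^bsub>SL2\<^esub> inv\<^bsub>SL2\<^esub> g"
  have "\<forall>q\<in>?c ` Q. q [^]\<^bsub>SL2\<^esub> CHAR('a) = \<one>\<^bsub>SL2\<^esub>"
    using exp Q C.hom_nat_pow[symmetric] by auto
  moreover have "\<forall>h\<in>?c ` G. h$2$1 = 0" using up by blast
  ultimately show ?thesis
    using upper_triangular_subgroup_standard_form[OF prime finite_imageI[OF assms(3)]
        C.subgroup_img_is_subgroup[OF sub] _ imageI[OF x] image_mono[OF QG] _
        C.image_decomposition[OF xc Q dec]] g
    unfolding p by blast
qed

end
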